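(* Let $K_n$ be the complete directed graph on $[n]$ with edges $(i,j)$ for all $i<j$. A subgraph $H\subseteq K_n$ gives a face $Q_H$ of $\tilde Q_{K_n}$ if and only if there are integers $0=n_0<n_1<\dots<n_\ell<n_{\ell+1}=n$ ($\ell\ge0$) and, for each $k=0,\dots,\ell$, disjoint subsets $L_k,R_k\subseteq[n_k+1,n_{k+1}]$ such that $H=\bigsqcup_{k=0}^{\ell}(K_{[n_k+1,n_{k+1}]})_{L_k,R_k}$, i.e. $E(H)=\{(i,j):i<j,\ i\in L_k,\ j\in R_k\text{ for some }k\}$.
   Context: $[a,b]=\{a,\dots,b\}$; $K_P$ is the complete graph on $P$ with edges oriented from smaller to larger vertex. For a graph $G$ and disjoint vertex sets $L,R$, $G_{L,R}$ is the subgraph with edges $\{(i,j)\in E(G):i\in L,j\in R\}$. Subgraphs $H\subseteq K_n$ have vertex set $[n]$. $Q_H=\mathrm{conv}\{\mathbf e_i-\mathbf e_j:(i,j)\in E(H)\}$ and $\tilde Q_{K_n}=\mathrm{conv}(\{\mathbf 0\}\cup\{\mathbf e_i-\mathbf e_j:1\le i<j\le n\})$ in $\mathbb R^n$. *)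

theory Defs
  imports "HOL-Analysis.Analysis"
begin

text \<open>R^n is modelled as real^'n with n = CARD('n); the coordinates are labelled
  by [n] = {1..n} through a fixed bijection idx :: nat => 'n (assumed in the theorem).\<close>

definition unitv :: "(nat \<Rightarrow> 'n::finite) \<Rightarrow> nat \<Rightarrow> real^'n" where
  "unitv idx i = axis (idx i) 1"

definition Kedges :: "nat \<Rightarrow> (nat \<times> nat) set" where
  "Kedges n = {(i, j). 1 \<le> i \<and> i < j \<and> j \<le> n}"

definition QH :: "(nat \<Rightarrow> 'n::finite) \<Rightarrow> (nat \<times> nat) set \<Rightarrow> (real^'n) set" where
  "QH idx E = convex hull {unitv idx i - unitv idx j | i j. (i, j) \<in> E}"

definition Qtilde :: "(nat \<Rightarrow> 'n::finite) \<Rightarrow> nat \<Rightarrow> (real^'n) set" where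
  "Qtilde idx n = convex hull (insert 0 {unitv idx i - unitv idx j | i j. (i, j) \<in> Kedges n})"

end

theory Submission
  imports Defs
begin

text \<open>
  A face of \<open>Q\<close> = \<open>\<tilde>Q\<^sub>K\<^sub>n\<close> is the set where some linear functional \<open>c\<close> attains its maximum
  on \<open>Q\<close>; since \<open>0 \<in> Q\<close> but \<open>0 \<notin> Q\<^sub>H\<close> for \<open>H \<noteq> \<emptyset>\<close>, the maximum is positive and
  may be normalised to \<open>1\<close>. Writing \<open>a\<^sub>i = c\<^sub>i\<close>, \<open>Q\<^sub>H\<close> is a face iff there is a potential \<open>a\<close> with
  \<open>a\<^sub>i - a\<^sub>j \<le> 1\<close> for all \<open>i < j\<close> and equality exactly on the edges of \<open>H\<close>.

  Such a potential forbids paths of length two in \<open>H\<close> and forces \<open>(x,v) \<in> H\<close> whenever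
  \<open>(x,y), (u,v) \<in> H\<close> with \<open>x < v\<close> and \<open>u < y\<close>. Cutting \<open>[n]\<close> at the positions \<open>m\<close> not spanned by
  any edge, these two closure properties make \<open>H\<close> complete bipartite from its sources to its
  sinks inside every block. Conversely, for a block decomposition the potential
  \<open>2k + 1\<close> on \<open>L\<^sub>k\<close>, \<open>2k\<close> on \<open>R\<^sub>k\<close> and \<open>2k + 1/2\<close> on the rest of block \<open>k\<close> works.
\<close>

definition edge_potential :: "nat \<Rightarrow> (nat \<times> nat) set \<Rightarrow> (nat \<Rightarrow> real) \<Rightarrow> bool" where
  "edge_potential n E a \<longleftrightarrow> (\<forall>(i, j)\<in>Kedges n. a i - a j \<le> 1 \<and> ((i, j) \<in> E \<longleftrightarrow> a i - a j = 1))"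

definition block_decomposition :: "nat \<Rightarrow> (nat \<times> nat) set \<Rightarrow> bool" where
  "block_decomposition n E \<longleftrightarrow>
    (\<exists>(l::nat) (ns::nat \<Rightarrow> nat) (L::nat \<Rightarrow> nat set) (R::nat \<Rightarrow> nat set).
       ns 0 = 0 \<and> ns (Suc l) = n \<and> (\<forall>k\<le>l. ns k < ns (Suc k)) \<and>
       (\<forall>k\<le>l. L k \<subseteq> {ns k + 1..ns (Suc k)} \<and> R k \<subseteq> {ns k + 1..ns (Suc k)} \<and> L k \<inter> R k = {}) \<and>
       E = {(i, j). i < j \<and> (\<exists>k\<le>l. i \<in> L k \<and> j \<in> R k)})"

definition cut_crossed :: "(nat \<times> nat) set \<Rightarrow> nat \<Rightarrow> bool" where
  "cut_crossed E m \<longleftrightarrow> (\<exists>x y. (x, y) \<in> E \<and> x \<le> m \<and> m < y)"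

locale subdivision =
  fixes ns :: "nat \<Rightarrow> nat" and l n :: nat
  assumes ns_0: "ns 0 = 0" and ns_last: "ns (Suc l) = n"
    and ns_step: "\<forall>k\<le>l. ns k < ns (Suc k)"
begin

lemma ns_less:
  assumes "k < k'" "k' \<le> Suc l"
  shows "ns k < ns k'"
  using assms
proof (induction k')
  case (Suc k')
  then have "ns k \<le> ns k'"
    by (cases "k = k'") auto
  also have "ns k' < ns (Suc k')"
    using ns_step Suc.prems by auto
  finally show ?case .
qed simp

lemma ns_le: "k \<le> k' \<Longrightarrow> k' \<le> Suc l \<Longrightarrow> ns k \<le> ns k'"
  using ns_less[of k k'] by (cases "k = k'") auto

definition block :: "nat \<Rightarrow> nat" where
  "block i = (LEAST k. i \<le> ns (Suc k))"

lemma block: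
  assumes "1 \<le> i" "i \<le> n"
  shows "block i \<le> l" "ns (block i) < i" "i \<le> ns (Suc (block i))"
proof -
  have ex: "i \<le> ns (Suc l)"
    using assms ns_last by simp
  show "i \<le> ns (Suc (block i))"
    unfolding block_def by (rule LeastI[of _ l]) (rule ex)
  show "block i \<le> l"
    unfolding block_def by (rule Least_le) (rule ex)
  show "ns (block i) < i"
  proof (cases "block i")
    case 0
    then show ?thesis using ns_0 assms by simp
  next
    case (Suc k)
    then have "\<not> i \<le> ns (Suc k)"
      using not_less_Least[of k "\<lambda>k. i \<le> ns (Suc k)"] by (simp add: block_def)
    then show ?thesis using Suc by simp
  qed
qed

lemma block_eqI:
  assumes "k \<le> l" "ns k < i" "i \<le> ns (Suc k)"
  shows "block i = k"
proof -
  have i: "1 \<le> i" "i \<le> n"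
    using assms ns_le[of "Suc k" "Suc l"] ns_last by auto
  show ?thesis
  proof (rule linorder_cases[of "block i" k])
    assume "block i < k"
    then show ?thesis using ns_le[of "Suc (block i)" k] assms block[OF i] by simp
  next
    assume "k < block i"
    then show ?thesis using ns_le[of "Suc k" "block i"] assms block[OF i] by simp
  qed
qed

end

lemma subdivision_enumerating:
  assumes "finite S" "S \<subseteq> {0..n}" "0 \<in> S" "n \<in> S" "0 < n"
  obtains ns l where "subdivision ns l n" "ns ` {..Suc l} = S"
proof -
  define xs where "xs = sorted_list_of_set S"
  have set_xs: "set xs = S" and sorted: "sorted_wrt (<) xs"
    using assms(1) by (simp_all add: xs_def)
  have "card {0, n} \<le> card S"
    using assms by (intro card_mono) auto
  then have "2 \<le> length xs"
    using assms(5) by (simp add: xs_def)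
  then obtain l where len: "length xs = Suc (Suc l)"
    by (metis add_2_eq_Suc le_Suc_ex)
  have less: "xs ! k < xs ! k'" if "k < k'" "k' \<le> Suc l" for k k'
    using sorted_wrt_nth_less[OF sorted] that len by simp
  have range: "(!) xs ` {..Suc l} = S"
    using len set_xs by (auto simp: in_set_conv_nth less_Suc_eq_le)
  have "xs ! 0 = 0"
  proof -
    obtain t where "t \<le> Suc l" "xs ! t = 0"
      using range assms(3) by force
    then show ?thesis using less[of 0 t] by (cases t) auto
  qed
  moreover have "xs ! Suc l = n"
  proof -
    obtain t where "t \<le> Suc l" "xs ! t = n"
      using range assms(4) by force
    moreover have "xs ! Suc l \<le> n"
      using range assms(2) by auto
    ultimately show ?thesis using less[of t "Suc l"] by (cases "t = Suc l") auto
  qed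
  ultimately have "subdivision ((!) xs) l n"
    using less by unfold_locales auto
  then show ?thesis using range that by blast
qed

subsection \<open>From a block decomposition to a potential\<close>

lemma (in subdivision) block_decomposition_potential:
  assumes LR: "\<forall>k\<le>l. L k \<subseteq> {ns k + 1..ns (Suc k)} \<and> R k \<subseteq> {ns k + 1..ns (Suc k)} \<and> L k \<inter> R k = {}"
    and E: "E = {(i, j). i < j \<and> (\<exists>k\<le>l. i \<in> L k \<and> j \<in> R k)}"
  shows "edge_potential n E
    (\<lambda>i. 2 * real (block i) + (if i \<in> L (block i) then 1 else if i \<in> R (block i) then 0 else 1/2))"
    (is "edge_potential n E ?a")
  unfolding edge_potential_def
proof clarify
  fix i j
  assume "(i, j) \<in> Kedges n"
  then have ij: "1 \<le> i" "i < j" "j \<le> n"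
    by (auto simp: Kedges_def)
  have bi: "block i \<le> l" "ns (block i) < i" "i \<le> ns (Suc (block i))"
    and bj: "block j \<le> l" "ns (block j) < j" "j \<le> ns (Suc (block j))"
    using block[of i] block[of j] ij by auto
  have E_iff: "(i, j) \<in> E \<longleftrightarrow> block i = block j \<and> i \<in> L (block i) \<and> j \<in> R (block j)"
  proof
    assume "(i, j) \<in> E"
    then obtain k where k: "k \<le> l" "i \<in> L k" "j \<in> R k"
      using E by auto
    moreover have "ns k < i" "i \<le> ns (Suc k)" "ns k < j" "j \<le> ns (Suc k)"
      using LR k by fastforce+
    ultimately have "block i = k" "block j = k"
      by (simp_all add: block_eqI)
    then show "block i = block j \<and> i \<in> L (block i) \<and> j \<in> R (block j)"
      using k by simp
  qed (use E ij bi in auto)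
  have L_not_R: "x \<in> L (block x) \<Longrightarrow> x \<notin> R (block x)" if "x \<in> {i, j}" for x
    using LR bi bj ij that by auto
  show "?a i - ?a j \<le> 1 \<and> ((i, j) \<in> E \<longleftrightarrow> ?a i - ?a j = 1)"
  proof (cases "block i = block j")
    case True
    then show ?thesis using E_iff L_not_R by (auto split: if_splits)
  next
    case False
    have "block i < block j"
    proof (rule ccontr)
      assume "\<not> block i < block j"
      then have "ns (Suc (block j)) \<le> ns (block i)"
        using False bi ns_le[of "Suc (block j)" "block i"] by simp
      then show False using bi bj ij by simp
    qed
    then have "?a i - ?a j \<le> -1"
      by (auto split: if_splits)
    then show ?thesis using E_iff False by auto
  qed
qed

subsection \<open>From a potential to a block decomposition\<close>

lemma edge_potential_no_path2:
  assumes "edge_potential n E a" "E \<subseteq> Kedges n" "(x, y) \<in> E" "(y, z) \<in> E"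
  shows False
proof -
  have "(x, y) \<in> Kedges n" "(y, z) \<in> Kedges n"
    using assms by auto
  moreover from this have "(x, z) \<in> Kedges n"
    by (auto simp: Kedges_def)
  ultimately have "a x - a y = 1" "a y - a z = 1" "a x - a z \<le> 1"
    using assms by (fastforce simp: edge_potential_def)+
  then show False by simp
qed

lemma edge_potential_overlap:
  assumes "edge_potential n E a" "E \<subseteq> Kedges n"
    and "(x, y) \<in> E" "(u, v) \<in> E" "x < v" "u < y"
  shows "(x, v) \<in> E"
proof -
  have K: "(x, y) \<in> Kedges n" "(u, v) \<in> Kedges n" "(x, v) \<in> Kedges n" "(u, y) \<in> Kedges n"
    using assms by (auto simp: Kedges_def)
  then have "a x - a y = 1" "a u - a v = 1" "a x - a v \<le> 1" "a u - a y \<le> 1"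
    using assms by (fastforce simp: edge_potential_def)+
  then have "a x - a v = 1" by simp
  then show ?thesis using K(3) assms(1) by (auto simp: edge_potential_def)
qed

text \<open>Within a stretch where every cut is crossed, the overlap property propagates an
  out-edge of \<open>i\<close> to the right until it reaches the in-edge of \<open>j\<close>.\<close>

lemma edge_if_cuts_crossed:
  assumes EK: "E \<subseteq> Kedges n"
    and no_path: "\<And>x y z. (x, y) \<in> E \<Longrightarrow> (y, z) \<in> E \<Longrightarrow> False"
    and overlap: "\<And>x y u v. (x, y) \<in> E \<Longrightarrow> (u, v) \<in> E \<Longrightarrow> x < v \<Longrightarrow> u < y \<Longrightarrow> (x, v) \<in> E"
    and ij: "i < j" and out: "(i, j') \<in> E" and into: "(i', j) \<in> E"
    and crossed: "\<And>m. i \<le> m \<Longrightarrow> m < j \<Longrightarrow> cut_crossed E m"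
  shows "(i, j) \<in> E"
proof -
  have "i' < j"
    using into EK by (auto simp: Kedges_def)
  then have beyond: "(i, j) \<in> E" if "(i, v) \<in> E" "j < v" for v
    using overlap[OF that(1) into] ij that(2) by simp
  show ?thesis
  proof (cases "j < j'")
    case True
    then show ?thesis using beyond out by blast
  next
    case False
    define Y where "Y = {y. (i, y) \<in> E \<and> y \<le> j}"
    have "finite Y" "j' \<in> Y"
      using False out by (auto simp: Y_def)
    define y where "y = Max Y"
    have "y \<in> Y" and y_max: "\<And>z. z \<in> Y \<Longrightarrow> z \<le> y"
      using Max_in[OF \<open>finite Y\<close>] Max_ge[OF \<open>finite Y\<close>] \<open>j' \<in> Y\<close> by (auto simp: y_def)
    then have iy: "(i, y) \<in> E" "y \<le> j" and "i < y"
      using EK by (auto simp: Y_def Kedges_def)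
    show ?thesis
    proof (rule ccontr)
      assume "(i, j) \<notin> E"
      then have "y < j" using iy by (cases "y = j") auto
      then obtain u v where uv: "(u, v) \<in> E" "u \<le> y" "y < v"
        using crossed[of y] \<open>i < y\<close> by (auto simp: cut_crossed_def)
      have "u \<noteq> y" using no_path iy(1) uv(1) by blast
      then have iv: "(i, v) \<in> E"
        using overlap[OF iy(1) uv(1)] \<open>i < y\<close> uv by auto
      then have "\<not> v \<le> j" using y_max[of v] uv by (auto simp: Y_def)
      then show False using beyond[OF iv] \<open>(i, j) \<notin> E\<close> by simp
    qed
  qed
qed

lemma block_decomposition_if_closed:
  assumes "0 < n" and EK: "E \<subseteq> Kedges n"
    and no_path: "\<And>x y z. (x, y) \<in> E \<Longrightarrow> (y, z) \<in> E \<Longrightarrow> False"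
    and overlap: "\<And>x y u v. (x, y) \<in> E \<Longrightarrow> (u, v) \<in> E \<Longrightarrow> x < v \<Longrightarrow> u < y \<Longrightarrow> (x, v) \<in> E"
  shows "block_decomposition n E"
proof -
  define S where "S = {0, n} \<union> {m \<in> {1..<n}. \<not> cut_crossed E m}"
  obtain ns l where sub: "subdivision ns l n" and S: "ns ` {..Suc l} = S"
    by (rule subdivision_enumerating[of S n]) (use \<open>0 < n\<close> in \<open>auto simp: S_def\<close>)
  interpret subdivision ns l n
    by (fact sub)
  define L where "L k = {i \<in> {ns k + 1..ns (Suc k)}. \<exists>y. (i, y) \<in> E}" for k
  define R where "R k = {j \<in> {ns k + 1..ns (Suc k)}. \<exists>x. (x, j) \<in> E}" for k
  have inside_crossed: "cut_crossed E m" if "k \<le> l" "ns k < m" "m < ns (Suc k)" for k m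
  proof (rule ccontr)
    assume "\<not> cut_crossed E m"
    moreover have "1 \<le> m" "m < n"
      using that ns_le[of "Suc k" "Suc l"] ns_last by auto
    ultimately have "m \<in> ns ` {..Suc l}"
      unfolding S S_def by simp
    then obtain t where "t \<le> Suc l" "ns t = m"
      by auto
    then show False
      using that ns_le[of t k] ns_le[of "Suc k" t] by (cases "t \<le> k") auto
  qed
  have edge_in_block: "j \<le> ns (Suc (block i))" if "(i, j) \<in> E" for i j
  proof (rule ccontr)
    let ?m = "ns (Suc (block i))"
    assume "\<not> j \<le> ?m"
    moreover have "1 \<le> i" "i < j" "j \<le> n"
      using that EK by (auto simp: Kedges_def)
    moreover note bi = block[of i]
    ultimately have "?m \<in> {m \<in> {1..<n}. cut_crossed E m}"
      using that unfolding cut_crossed_def by fastforce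
    moreover have "?m \<in> S"
      unfolding S[symmetric] using bi \<open>1 \<le> i\<close> \<open>i < j\<close> \<open>j \<le> n\<close> by auto
    ultimately show False by (auto simp: S_def)
  qed
  have "E = {(i, j). i < j \<and> (\<exists>k\<le>l. i \<in> L k \<and> j \<in> R k)}"
  proof safe
    fix i j
    assume e: "(i, j) \<in> E"
    then have "1 \<le> i" "i < j" "j \<le> n"
      using EK by (auto simp: Kedges_def)
    moreover have "i \<in> L (block i)" "j \<in> R (block i)"
      using calculation e block[of i] edge_in_block[OF e] by (auto simp: L_def R_def)
    ultimately show "i < j" "\<exists>k\<le>l. i \<in> L k \<and> j \<in> R k"
      using block[of i] by auto
  next
    fix i j k
    assume "i < j" "k \<le> l" "i \<in> L k" "j \<in> R k"
    then obtain i' j' where out: "(i, j') \<in> E" and into: "(i', j) \<in> E"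
      and bounds: "ns k < i" "j \<le> ns (Suc k)"
      by (auto simp: L_def R_def)
    show "(i, j) \<in> E"
    proof (rule edge_if_cuts_crossed[OF EK no_path overlap \<open>i < j\<close> out into])
      fix m
      assume "i \<le> m" "m < j"
      then show "cut_crossed E m"
        using inside_crossed[of k m] \<open>k \<le> l\<close> bounds by simp
    qed
  qed
  moreover have "L k \<inter> R k = {}" for k
    using no_path by (auto simp: L_def R_def)
  ultimately show ?thesis
    unfolding block_decomposition_def using ns_0 ns_last ns_step
    by (intro exI[of _ l] exI[of _ ns] exI[of _ L] exI[of _ R]) (auto simp: L_def R_def)
qed

lemma edge_potential_iff_block_decomposition:
  assumes "0 < n" "E \<subseteq> Kedges n"
  shows "(\<exists>a. edge_potential n E a) \<longleftrightarrow> block_decomposition n E"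
proof
  assume "\<exists>a. edge_potential n E a"
  then obtain a where "edge_potential n E a" ..
  then show "block_decomposition n E"
    using assms edge_potential_no_path2 edge_potential_overlap
    by (intro block_decomposition_if_closed) blast+
next
  assume "block_decomposition n E"
  then obtain l ns L R where "subdivision ns l n"
    and "\<forall>k\<le>l. L k \<subseteq> {ns k + 1..ns (Suc k)} \<and> R k \<subseteq> {ns k + 1..ns (Suc k)} \<and> L k \<inter> R k = {}"
    and "E = {(i, j). i < j \<and> (\<exists>k\<le>l. i \<in> L k \<and> j \<in> R k)}"
    unfolding block_decomposition_def subdivision_def by blast
  then show "\<exists>a. edge_potential n E a"
    using subdivision.block_decomposition_potential by blast
qed

subsection \<open>Faces of \<open>\<tilde>Q\<^sub>K\<^sub>n\<close> and potentials\<close>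

lemma finite_Kedges: "finite (Kedges n)"
  by (rule finite_subset[of _ "{1..n} \<times> {1..n}"]) (auto simp: Kedges_def)

definition labelled_vector :: "(nat \<Rightarrow> 'n::finite) \<Rightarrow> nat \<Rightarrow> (nat \<Rightarrow> real) \<Rightarrow> real^'n" where
  "labelled_vector idx n a = (\<chi> k. a (inv_into {1..n} idx k))"

lemma labelled_vector_nth:
  "inj_on idx {1..n} \<Longrightarrow> i \<in> {1..n} \<Longrightarrow> labelled_vector idx n a $ idx i = a i"
  by (simp add: labelled_vector_def inv_into_f_f)

lemma unitv_nth:
  "inj_on idx A \<Longrightarrow> i \<in> A \<Longrightarrow> k \<in> A \<Longrightarrow> unitv idx i $ idx k = (if k = i then 1 else 0)"
  by (auto simp: unitv_def axis_def inj_on_eq_iff)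

lemma inner_unitv_diff: "c \<bullet> (unitv idx i - unitv idx j) = c $ idx i - c $ idx j"
  by (simp add: unitv_def inner_diff_right inner_axis)

lemma finite_edge_vectors:
  assumes "finite E"
  shows "finite {unitv idx i - unitv idx j | i j. (i, j) \<in> E}"
proof -
  have "{unitv idx i - unitv idx j | i j. (i, j) \<in> E} = (\<lambda>(i, j). unitv idx i - unitv idx j) ` E"
    by auto
  then show ?thesis using assms by simp
qed

lemma convex_hull_le_halfspace:
  fixes c :: "'a::real_inner"
  assumes "\<And>x. x \<in> S \<Longrightarrow> c \<bullet> x \<le> b"
  shows "convex hull S \<subseteq> {x. c \<bullet> x \<le> b}"
  by (rule hull_minimal) (use assms convex_halfspace_le in auto)

lemma zero_notin_QH:
  assumes inj: "inj_on idx {1..n}" and EK: "E \<subseteq> Kedges n"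
  shows "0 \<notin> QH idx E"
proof -
  let ?w = "labelled_vector idx n real"
  have "?w \<bullet> y \<le> -1" if "y \<in> {unitv idx i - unitv idx j | i j. (i, j) \<in> E}" for y
    using that EK by (auto simp: inner_unitv_diff labelled_vector_nth[OF inj] Kedges_def)
  then have "QH idx E \<subseteq> {x. ?w \<bullet> x \<le> -1}"
    unfolding QH_def by (rule convex_hull_le_halfspace)
  then show ?thesis by auto
qed

lemma edge_vector_in_QH_imp_edge:
  assumes inj: "inj_on idx {1..n}" and EK: "E \<subseteq> Kedges n"
    and ij: "(i, j) \<in> Kedges n" and in_QH: "unitv idx i - unitv idx j \<in> QH idx E"
  shows "(i, j) \<in> E"
proof (rule ccontr)
  assume "(i, j) \<notin> E"
  define g where "g = unitv idx i - unitv idx j"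
  have ij_range: "i \<in> {1..n}" "j \<in> {1..n}" "i \<noteq> j"
    using ij by (auto simp: Kedges_def)
  have g_inner: "g \<bullet> (unitv idx k - unitv idx l) = (if k = i then 1 else 0) - (if k = j then 1 else 0)
      - (if l = i then 1 else 0) + (if l = j then 1 else 0)"
    if "k \<in> {1..n}" "l \<in> {1..n}" for k l
    unfolding g_def inner_unitv_diff vector_minus_component
    using unitv_nth[OF inj] that ij_range by simp
  have "g \<bullet> y \<le> 1" if y_gen: "y \<in> {unitv idx i - unitv idx j | i j. (i, j) \<in> E}" for y
  proof -
    obtain k l where y: "y = unitv idx k - unitv idx l" "(k, l) \<in> E"
      using y_gen by blast
    then have "(k, l) \<in> Kedges n" "(k, l) \<noteq> (i, j)"
      using EK \<open>(i, j) \<notin> E\<close> by auto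
    then show ?thesis using y g_inner[of k l] ij_range by (auto simp: Kedges_def)
  qed
  then have "QH idx E \<subseteq> {x. g \<bullet> x \<le> 1}"
    unfolding QH_def by (rule convex_hull_le_halfspace)
  moreover have "g \<bullet> g = 2"
    using g_inner[of i j] ij_range by (simp add: g_def)
  ultimately show False
    using in_QH by (auto simp: g_def)
qed

lemma edge_potential_imp_QH_face_of_Qtilde:
  fixes idx :: "nat \<Rightarrow> 'n::finite"
  assumes inj: "inj_on idx {1..n}" and EK: "E \<subseteq> Kedges n" and a: "edge_potential n E a"
  shows "QH idx E face_of Qtilde idx n"
proof -
  let ?c = "labelled_vector idx n a"
  define S where "S = insert 0 {unitv idx i - unitv idx j | i j. (i, j) \<in> Kedges n}"
  have Q: "Qtilde idx n = convex hull S"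
    by (simp add: Qtilde_def S_def)
  have c_edge: "?c \<bullet> (unitv idx i - unitv idx j) = a i - a j" if "(i, j) \<in> Kedges n" for i j
    using that by (simp add: inner_unitv_diff labelled_vector_nth[OF inj] Kedges_def)
  have "Qtilde idx n \<subseteq> {x. ?c \<bullet> x \<le> 1}"
    unfolding Q S_def
    by (rule convex_hull_le_halfspace) (use a c_edge in \<open>auto simp: edge_potential_def\<close>)
  then have face: "Qtilde idx n \<inter> {x. ?c \<bullet> x = 1} face_of Qtilde idx n"
    by (intro face_of_Int_supporting_hyperplane_le) (auto simp: Q)
  have gens_E: "unitv idx i - unitv idx j \<in> Qtilde idx n \<inter> {x. ?c \<bullet> x = 1}"
    if "(i, j) \<in> E" for i j
  proof -
    have "(i, j) \<in> Kedges n"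
      using that EK by auto
    then show ?thesis
      using that a c_edge unfolding Q S_def by (auto intro: hull_inc simp: edge_potential_def)
  qed
  have "Qtilde idx n \<inter> {x. ?c \<bullet> x = 1} = QH idx E"
  proof
    show "QH idx E \<subseteq> Qtilde idx n \<inter> {x. ?c \<bullet> x = 1}"
      unfolding QH_def by (rule hull_minimal) (use gens_E face_of_imp_convex[OF face] in blast)+
  next
    have "finite S"
      using finite_edge_vectors[OF finite_Kedges] by (simp add: S_def)
    then obtain S' where S': "S' \<subseteq> S" "Qtilde idx n \<inter> {x. ?c \<bullet> x = 1} = convex hull S'"
      using face_of_convex_hull_subset[OF finite_imp_compact] face Q by metis
    have "S' \<subseteq> {unitv idx i - unitv idx j | i j. (i, j) \<in> E}"
    proof
      fix x
      assume "x \<in> S'"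
      then have "x \<in> S" "?c \<bullet> x = 1"
        using S' hull_subset[of S' convex] by auto
      then obtain i j where x: "x = unitv idx i - unitv idx j" "(i, j) \<in> Kedges n"
        by (auto simp: S_def)
      then have "(i, j) \<in> E"
        using a c_edge \<open>?c \<bullet> x = 1\<close> by (auto simp: edge_potential_def)
      then show "x \<in> {unitv idx i - unitv idx j | i j. (i, j) \<in> E}"
        using x by auto
    qed
    then show "Qtilde idx n \<inter> {x. ?c \<bullet> x = 1} \<subseteq> QH idx E"
      unfolding QH_def S'(2) by (rule hull_mono)
  qed
  then show ?thesis
    using face by simp
qed

lemma QH_face_of_Qtilde_imp_edge_potential:
  fixes idx :: "nat \<Rightarrow> 'n::finite"
  assumes inj: "inj_on idx {1..n}" and EK: "E \<subseteq> Kedges n"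
    and face: "QH idx E face_of Qtilde idx n"
  shows "\<exists>a. edge_potential n E a"
proof (cases "E = {}")
  case True
  then show ?thesis
    by (intro exI[of _ "\<lambda>_. 0"]) (simp add: edge_potential_def)
next
  case False
  define S where "S = insert 0 {unitv idx i - unitv idx j | i j. (i, j) \<in> Kedges n}"
  have Q: "Qtilde idx n = convex hull S"
    by (simp add: Qtilde_def S_def)
  have "finite S"
    using finite_edge_vectors[OF finite_Kedges] by (simp add: S_def)
  then have "QH idx E exposed_face_of Qtilde idx n"
    using face exposed_face_of_polyhedron polyhedron_convex_hull Q by metis
  then obtain c b where le: "Qtilde idx n \<subseteq> {x. c \<bullet> x \<le> b}"
    and eq: "QH idx E = Qtilde idx n \<inter> {x. c \<bullet> x = b}"
    unfolding exposed_face_of_def by blast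
  have in_Q: "unitv idx i - unitv idx j \<in> Qtilde idx n" if "(i, j) \<in> Kedges n" for i j
    unfolding Q S_def by (rule hull_inc) (use that in auto)
  have "0 \<in> Qtilde idx n"
    unfolding Q S_def by (rule hull_inc) simp
  moreover have "QH idx E \<noteq> {}"
    using False by (auto simp: QH_def)
  ultimately have "0 < b"
    using le eq zero_notin_QH[OF inj EK] by force
  define a where "a i = c $ idx i / b" for i
  have a_edge: "a i - a j = (c \<bullet> (unitv idx i - unitv idx j)) / b" for i j
    by (simp add: a_def inner_unitv_diff diff_divide_distrib)
  have "a i - a j \<le> 1 \<and> ((i, j) \<in> E \<longleftrightarrow> a i - a j = 1)" if ij: "(i, j) \<in> Kedges n" for i j
  proof -
    have "(i, j) \<in> E \<longleftrightarrow> unitv idx i - unitv idx j \<in> QH idx E"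
      using edge_vector_in_QH_imp_edge[OF inj EK ij] by (auto simp: QH_def intro: hull_inc)
    also have "\<dots> \<longleftrightarrow> c \<bullet> (unitv idx i - unitv idx j) = b"
      using eq in_Q[OF ij] by auto
    finally show ?thesis
      using le in_Q[OF ij] \<open>0 < b\<close> by (auto simp: a_edge)
  qed
  then show ?thesis
    unfolding edge_potential_def by blast
qed

lemma QH_face_of_Qtilde_iff_edge_potential:
  fixes idx :: "nat \<Rightarrow> 'n::finite"
  assumes "inj_on idx {1..n}" "E \<subseteq> Kedges n"
  shows "QH idx E face_of Qtilde idx n \<longleftrightarrow> (\<exists>a. edge_potential n E a)"
  using assms QH_face_of_Qtilde_imp_edge_potential edge_potential_imp_QH_face_of_Qtilde by blast

theorem mainTheorem18:
  fixes idx :: "nat \<Rightarrow> 'n::finite" and E :: "(nat \<times> nat) set"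
  assumes "bij_betw idx {1..CARD('n)} UNIV"
    and "E \<subseteq> Kedges CARD('n)"
  shows "QH idx E face_of Qtilde idx CARD('n) \<longleftrightarrow>
    (\<exists>(l::nat) (ns::nat \<Rightarrow> nat) (L::nat \<Rightarrow> nat set) (R::nat \<Rightarrow> nat set).
       ns 0 = 0 \<and> ns (Suc l) = CARD('n) \<and> (\<forall>k\<le>l. ns k < ns (Suc k)) \<and>
       (\<forall>k\<le>l. L k \<subseteq> {ns k + 1..ns (Suc k)} \<and> R k \<subseteq> {ns k + 1..ns (Suc k)} \<and> L k \<inter> R k = {}) \<and>
       E = {(i, j). i < j \<and> (\<exists>k\<le>l. i \<in> L k \<and> j \<in> R k)})"
proof -
  have "inj_on idx {1..CARD('n)}"
    using assms(1) by (rule bij_betw_imp_inj_on)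
  then have "QH idx E face_of Qtilde idx CARD('n) \<longleftrightarrow> (\<exists>a. edge_potential CARD('n) E a)"
    using assms(2) by (rule QH_face_of_Qtilde_iff_edge_potential)
  also have "\<dots> \<longleftrightarrow> block_decomposition CARD('n) E"
    using assms(2) by (intro edge_potential_iff_block_decomposition) simp_all
  finally show ?thesis
    unfolding block_decomposition_def .
qed

end
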